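(* Let $q$ be a power of an odd prime, $d\ge 1$, and $E\subset\mathbb{F}_q^d$. If $|E|>\frac{q^d-1}{q-1}+1$, then $E$ contains three distinct collinear points. If moreover $d$ is even, then already $|E|>\frac{q^d-1}{q-1}$ implies that $E$ contains three distinct collinear points.
   Context: A line in $\mathbb{F}_q^d$ is a set $\{u+rv: r\in\mathbb{F}_q\}$ with $u,v\in\mathbb{F}_q^d$, $v\neq0$; points are collinear if they lie on a common line. *)

theory Defs
  imports "HOL-Analysis.Finite_Cartesian_Product"
begin

text \<open>A line in F^d (vectors indexed by the finite type 'n, d = CARD('n)):
  a set {u + r v : r in F} with v nonzero.\<close>
definition is_line :: "('a::field ^ 'n) set \<Rightarrow> bool" where
  "is_line L \<longleftrightarrow> (\<exists>u v. v \<noteq> 0 \<and> L = {u + r *s v | r. True})"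

definition collinear_pts :: "('a::field ^ 'n) set \<Rightarrow> bool" where
  "collinear_pts S \<longleftrightarrow> (\<exists>L. is_line L \<and> S \<subseteq> L)"

definition has_three_collinear :: "('a::field ^ 'n) set \<Rightarrow> bool" where
  "has_three_collinear E \<longleftrightarrow>
     (\<exists>x\<in>E. \<exists>y\<in>E. \<exists>z\<in>E. x \<noteq> y \<and> x \<noteq> z \<and> y \<noteq> z \<and> collinear_pts {x, y, z})"

end

theory Submission
  imports Defs
begin

text \<open>
  Fix a point p of a set E without three collinear points. The vectors r (x - p) with
  x \<in> E - {p} and r \<noteq> 0 are pairwise distinct, since a coincidence would put p and two
  points of E on one line; counting them gives (|E| - 1)(q - 1) \<le> q^d - 1.
  If equality holds, every line through every point of E meets E in a second point.
  Then for a point x0 outside E, the lines through x0 split E into pairs, so |E| is even,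
  whereas for even d and odd q the bound (q^d - 1)/(q - 1) + 1 = 1 + q + \<dots> + q^(d-1) + 1
  is odd.
\<close>

lemma geometric_sum_nat:
  fixes q :: nat
  assumes "q \<ge> 1"
  shows "q ^ d - 1 = (q - 1) * (\<Sum>i<d. q ^ i)"
proof -
  have "int (q ^ d - 1) = int q ^ d - 1" using assms by (simp add: of_nat_diff)
  also have "\<dots> = (int q - 1) * (\<Sum>i<d. int q ^ i)" by (rule power_diff_1_eq)
  also have "\<dots> = int ((q - 1) * (\<Sum>i<d. q ^ i))" using assms by (simp add: of_nat_diff)
  finally show ?thesis by linarith
qed

lemma even_geometric_sum_iff:
  fixes q :: nat
  assumes "odd q"
  shows "even (\<Sum>i<d. q ^ i) \<longleftrightarrow> even d"
  using assms by (induction d) auto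

lemma even_card_involution:
  assumes "finite S" and "\<And>x. x \<in> S \<Longrightarrow> f x \<in> S \<and> f x \<noteq> x \<and> f (f x) = x"
  shows "even (card S)"
  using assms
proof (induction "card S" arbitrary: S rule: less_induct)
  case less
  show ?case
  proof (cases "S = {}")
    case False
    then obtain x where x: "x \<in> S" by blast
    define S' where "S' = S - {x, f x}"
    have pair: "{x, f x} \<subseteq> S" "card {x, f x} = 2" using less.prems(2)[OF x] x by auto
    have card_S: "card S = card S' + 2"
      using card_Diff_subset[OF _ pair(1)] card_mono[OF less.prems(1) pair(1)] pair(2)
      unfolding S'_def by simp
    have "f y \<in> S' \<and> f y \<noteq> y \<and> f (f y) = y" if "y \<in> S'" for y
    proof -
      have y: "y \<in> S" "y \<noteq> x" "y \<noteq> f x" using that unfolding S'_def by auto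
      then have "f y \<noteq> x" "f y \<noteq> f x" using less.prems(2) x by metis+
      then show ?thesis using less.prems(2)[OF y(1)] unfolding S'_def by blast
    qed
    moreover have "card S' < card S" "finite S'" using card_S less.prems(1) unfolding S'_def by auto
    ultimately have "even (card S')" using less.hyps by blast
    then show ?thesis using card_S by simp
  qed simp
qed

lemma has_three_collinearI:
  fixes a b c :: "'a::field ^ 'n"
  assumes "a \<in> E" "b \<in> E" "c \<in> E" "a \<noteq> b" "a \<noteq> c" "b \<noteq> c"
    and "c - a = t *s (b - a)"
  shows "has_three_collinear E"
proof -
  have "a = a + 0 *s (b - a)" "b = a + 1 *s (b - a)" "c = a + t *s (b - a)"
    using assms(7) by (simp_all add: algebra_simps)
  then have "{a, b, c} \<subseteq> {a + r *s (b - a) | r. True}" by blast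
  moreover have "b - a \<noteq> 0" using assms(4) by simp
  ultimately have "collinear_pts {a, b, c}"
    unfolding collinear_pts_def is_line_def by blast
  then show ?thesis unfolding has_three_collinear_def using assms(1-6) by blast
qed

lemma smult_eq_smult_iff:
  fixes x y :: "'a::field ^ 'n"
  assumes "r \<noteq> 0"
  shows "r *s x = s *s y \<longleftrightarrow> x = (s / r) *s y"
  using assms by (auto simp: vec_eq_iff field_simps)

lemma no_three_collinear_same_direction:
  fixes E :: "('a::field ^ 'n) set"
  assumes "\<not> has_three_collinear E" "y \<in> E" "z \<in> E" "z' \<in> E" "z \<noteq> y" "z' \<noteq> y"
    and "z - y = t *s w" "z' - y = t' *s w"
  shows "z = z'"
proof (rule ccontr)
  assume "z \<noteq> z'"
  have "t \<noteq> 0" using assms(5,7) by auto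
  then have "z' - y = (t' / t) *s (z - y)" using assms(7,8) by (simp add: vector_smult_assoc)
  then show False using has_three_collinearI[of y E z z'] assms \<open>z \<noteq> z'\<close> by blast
qed

lemma inj_on_scaled_differences:
  fixes E :: "('a::field ^ 'n) set"
  assumes "\<not> has_three_collinear E" "p \<in> E"
  shows "inj_on (\<lambda>(x, r). r *s (x - p)) ((E - {p}) \<times> (UNIV - {0}))"
proof (rule inj_onI)
  fix a b
  assume "a \<in> (E - {p}) \<times> (UNIV - {0})" "b \<in> (E - {p}) \<times> (UNIV - {0})"
    and "(\<lambda>(x, r). r *s (x - p)) a = (\<lambda>(x, r). r *s (x - p)) b"
  moreover obtain x r y s where "a = (x, r)" "b = (y, s)" by (cases a, cases b)
  ultimately have x: "x \<in> E" "x \<noteq> p" and y: "y \<in> E" "y \<noteq> p" and "r \<noteq> 0"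
    and eq: "r *s (x - p) = s *s (y - p)" by auto
  then have "x - p = (s / r) *s (y - p)" using smult_eq_smult_iff by blast
  then have "x = y"
    using has_three_collinearI[of p E y x] assms x y by blast
  then show "a = b" using eq x(2) \<open>a = (x, r)\<close> \<open>b = (y, s)\<close> by simp
qed

lemma card_no_three_collinear_mult_le:
  fixes E :: "('a::{field,finite} ^ 'n) set"
  assumes "\<not> has_three_collinear E" "p \<in> E"
  shows "(card E - 1) * (CARD('a) - 1) \<le> CARD('a) ^ CARD('n) - 1"
    and "(card E - 1) * (CARD('a) - 1) = CARD('a) ^ CARD('n) - 1 \<Longrightarrow> v \<noteq> 0 \<Longrightarrow>
         \<exists>x\<in>E. x \<noteq> p \<and> (\<exists>t. x - p = t *s v)"
proof -
  let ?D = "(E - {p}) \<times> (UNIV - {0::'a})"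
  let ?f = "\<lambda>(x, r). r *s (x - p)"
  have image_sub: "?f ` ?D \<subseteq> UNIV - {0}" by auto
  have card_image: "card (?f ` ?D) = (card E - 1) * (CARD('a) - 1)"
    using card_image[OF inj_on_scaled_differences[OF assms]] assms(2)
    by (simp add: card_cartesian_product card_Diff_singleton)
  have card_nonzero: "card (UNIV - {0 :: 'a ^ 'n}) = CARD('a) ^ CARD('n) - 1"
    by (simp add: card_Diff_singleton)
  show "(card E - 1) * (CARD('a) - 1) \<le> CARD('a) ^ CARD('n) - 1"
    using card_mono[OF _ image_sub] card_image card_nonzero by simp
  assume "(card E - 1) * (CARD('a) - 1) = CARD('a) ^ CARD('n) - 1" "v \<noteq> 0"
  then have "v \<in> ?f ` ?D"
    using card_subset_eq[OF _ image_sub] card_image card_nonzero by simp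
  then obtain x r where "x \<in> E" "x \<noteq> p" "r \<noteq> 0" "v = r *s (x - p)" by auto
  then have "x - p = inverse r *s v" by (simp add: vector_smult_assoc)
  then show "\<exists>x\<in>E. x \<noteq> p \<and> (\<exists>t. x - p = t *s v)" using \<open>x \<in> E\<close> \<open>x \<noteq> p\<close> by blast
qed

lemma diff_smult_swap:
  fixes a b c :: "'a::field ^ 'n"
  assumes "b - a = t *s (a - c)" "b \<noteq> c"
  shows "a - b = (- t / (1 + t)) *s (b - c)"
proof -
  have b_c: "b - c = (1 + t) *s (a - c)"
    using assms(1) by (simp add: vector_sadd_rdistrib algebra_simps)
  then have "1 + t \<noteq> 0" using assms(2) by auto
  then have "(- t / (1 + t)) *s (b - c) = (- t) *s (a - c)"
    using b_c by (simp add: vector_smult_assoc)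
  also have "\<dots> = a - b" by (metis assms(1) minus_diff_eq vector_smult_lneg)
  finally show ?thesis by simp
qed

lemma even_card_if_every_line_meets_twice:
  fixes E :: "('a::{field,finite} ^ 'n) set"
  assumes nc: "\<not> has_three_collinear E" and "c \<notin> E"
    and every_direction: "\<And>p v. p \<in> E \<Longrightarrow> v \<noteq> 0 \<Longrightarrow> \<exists>x\<in>E. x \<noteq> p \<and> (\<exists>t. x - p = t *s v)"
  shows "even (card E)"
proof (rule even_card_involution)
  define partner where
    "partner p = (SOME x. x \<in> E \<and> x \<noteq> p \<and> (\<exists>t. x - p = t *s (p - c)))" for p
  have partner: "partner p \<in> E \<and> partner p \<noteq> p \<and> (\<exists>t. partner p - p = t *s (p - c))"
    if "p \<in> E" for p
    unfolding partner_def
    by (rule someI_ex) (use every_direction[OF that, of "p - c"] that \<open>c \<notin> E\<close> in auto)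
  have partner_unique: "x = partner p"
    if "p \<in> E" "x \<in> E" "x \<noteq> p" "x - p = t *s (p - c)" for p x t
    using partner[OF that(1)] no_three_collinear_same_direction[OF nc that(1,2)] that(3,4)
    by blast
  show "partner p \<in> E \<and> partner p \<noteq> p \<and> partner (partner p) = p" if p: "p \<in> E" for p
  proof -
    obtain t where t: "partner p - p = t *s (p - c)" using partner[OF p] by blast
    have "partner p \<noteq> c" using partner[OF p] \<open>c \<notin> E\<close> by auto
    then have "p - partner p = (- t / (1 + t)) *s (partner p - c)"
      using diff_smult_swap[OF t] by blast
    then have "p = partner (partner p)"
      using partner_unique partner[OF p] p by metis
    then show ?thesis using partner[OF p] by simp
  qed
qed simp

lemma card_field_ge_2: "CARD('a::{field,finite}) \<ge> 2"
  using card_mono[of UNIV "{0::'a, 1}"] by simp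

lemma card_no_three_collinear_le:
  fixes E :: "('a::{field,finite} ^ 'n) set"
  assumes "\<not> has_three_collinear E"
  shows "card E \<le> (\<Sum>i<CARD('n). CARD('a) ^ i) + 1"
proof (cases "E = {}")
  case False
  then obtain p where "p \<in> E" by blast
  then have "(card E - 1) * (CARD('a) - 1) \<le> (\<Sum>i<CARD('n). CARD('a) ^ i) * (CARD('a) - 1)"
    using card_no_three_collinear_mult_le(1)[OF assms] geometric_sum_nat[of "CARD('a)"]
    by (simp add: mult.commute)
  then show ?thesis using card_field_ge_2[where 'a='a] by simp
qed simp

lemma card_no_three_collinear_ne:
  fixes E :: "('a::{field,finite} ^ 'n) set"
  assumes nc: "\<not> has_three_collinear E" and "odd CARD('a)" and "even CARD('n)"
  shows "card E \<noteq> (\<Sum>i<CARD('n). CARD('a) ^ i) + 1"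
proof
  define q d where "q = CARD('a)" and "d = CARD('n)"
  define N where "N = (\<Sum>i<d. q ^ i)"
  assume "card E = (\<Sum>i<CARD('n). CARD('a) ^ i) + 1"
  then have card_E: "card E = N + 1" unfolding N_def q_def d_def .
  have q: "q \<ge> 3" using card_field_ge_2[where 'a='a] \<open>odd CARD('a)\<close> unfolding q_def by presburger
  have geometric: "q ^ d - 1 = (q - 1) * N" unfolding N_def using geometric_sum_nat q by simp
  then have maximal: "(card E - 1) * (CARD('a) - 1) = CARD('a) ^ CARD('n) - 1"
    using card_E unfolding q_def d_def by (simp add: mult.commute)
  obtain d' where "d = Suc d'" using gr0_implies_Suc[of d] unfolding d_def by auto
  moreover have "q ^ d' \<ge> 1" using q by simp
  ultimately have N_pos: "N \<ge> 1" unfolding N_def by (simp add: lessThan_Suc)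
  have "q ^ d \<ge> 1" using q by simp
  then have "q ^ d = (q - 1) * N + 1" using geometric by arith
  moreover have "(q - 1) * N \<ge> 2 * N" using q by (intro mult_right_mono) auto
  ultimately have "card E < CARD('a ^ 'n)" using card_E N_pos unfolding q_def d_def by simp
  then obtain c where "c \<notin> E" by (metis UNIV_I card_mono finite leD subsetI)
  then have "even (card E)"
    using even_card_if_every_line_meets_twice[OF nc] card_no_three_collinear_mult_le(2)[OF nc _ maximal]
    by blast
  moreover have "even N"
    unfolding N_def q_def d_def using even_geometric_sum_iff assms(2,3) by blast
  ultimately show False using card_E by simp
qed

theorem mainTheorem11:
  fixes E :: "('a::{field,finite} ^ 'n) set"
  assumes "odd CARD('a)"
  shows "(card E > (CARD('a) ^ CARD('n) - 1) div (CARD('a) - 1) + 1 \<longrightarrow> has_three_collinear E)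
       \<and> (even CARD('n) \<and> card E > (CARD('a) ^ CARD('n) - 1) div (CARD('a) - 1)
            \<longrightarrow> has_three_collinear E)"
proof -
  have "(CARD('a) ^ CARD('n) - 1) div (CARD('a) - 1) = (\<Sum>i<CARD('n). CARD('a) ^ i)"
    using geometric_sum_nat[of "CARD('a)"] card_field_ge_2[where 'a='a] by simp
  then show ?thesis
    using card_no_three_collinear_le[of E] card_no_three_collinear_ne[of E, OF _ assms]
    by fastforce
qed

end
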